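(* Let $d\geq 2$ and let $\rho$ be a diagonal symmetric (DS) state acting on $\mathbb{C}^d\otimes\mathbb{C}^d$, with associated matrix $M(\rho)$. Then $\rho$ is separable if and only if $M(\rho)$ is completely positive.
   Context: Let $\{\ket{0},\dots,\ket{d-1}\}$ be the computational basis of $\mathbb{C}^d$. Define $\ket{D_{ii}}=\ket{ii}$ and, for $i<j$, $\ket{D_{ij}}=(\ket{ij}+\ket{ji})/\sqrt{2}$. A state $\rho$ on $\mathbb{C}^d\otimes\mathbb{C}^d$ is diagonal symmetric (DS) if $\rho=\sum_{0\le i\le j<d}p_{ij}\ket{D_{ij}}\bra{D_{ij}}$ with $p_{ij}\ge 0$ and $\sum_{i\le j}p_{ij}=1$; set $p_{ji}=p_{ij}$. Its associated matrix $M(\rho)$ is the real symmetric $d\times d$ matrix with entries $M(\rho)_{ii}=p_{ii}$ and $M(\rho)_{ij}=p_{ij}/2$ for $i\neq j$. A state is separable if it is a convex combination of product states $\rho^A\otimes\rho^B$. A real $d\times d$ matrix $A$ is completely positive if $A=BB^T$ for some real $d\times k$ matrix $B$ ($k\ge1$) with all entries $B_{ij}\ge 0$. *)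

theory Defs
  imports "HOL-Analysis.Analysis"
begin

text \<open>Matrices on C^d are functions nat => nat => complex, only entries with
indices < d matter. Operators on C^d (x) C^d are indexed by pairs (a,b) with
a,b < d, the pair (a,b) standing for the basis vector |a b>.\<close>

type_synonym cmat = "nat \<Rightarrow> nat \<Rightarrow> complex"
type_synonym bop = "nat \<times> nat \<Rightarrow> nat \<times> nat \<Rightarrow> complex"

definition density :: "nat \<Rightarrow> cmat \<Rightarrow> bool" where
  "density d A \<longleftrightarrow>
     (\<forall>v :: nat \<Rightarrow> complex.
        Im (\<Sum>i<d. \<Sum>j<d. cnj (v i) * A i j * v j) = 0 \<and>
        Re (\<Sum>i<d. \<Sum>j<d. cnj (v i) * A i j * v j) \<ge> 0)
     \<and> (\<Sum>i<d. A i i) = 1"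

text \<open>Separable: finite convex combination of product states rho^A (x) rho^B.
(rho^A (x) rho^B) at ((i,k),(j,l)) = rho^A i j * rho^B k l.\<close>
definition separable :: "nat \<Rightarrow> bop \<Rightarrow> bool" where
  "separable d \<rho> \<longleftrightarrow>
     (\<exists>(n::nat) (w::nat \<Rightarrow> real) (A::nat \<Rightarrow> cmat) (B::nat \<Rightarrow> cmat).
        (\<forall>m<n. w m \<ge> 0) \<and> (\<Sum>m<n. w m) = 1 \<and>
        (\<forall>m<n. density d (A m) \<and> density d (B m)) \<and>
        (\<forall>i<d. \<forall>k<d. \<forall>j<d. \<forall>l<d.
            \<rho> (i,k) (j,l) = (\<Sum>m<n. complex_of_real (w m) * A m i j * B m k l)))"

definition Dket :: "nat \<Rightarrow> nat \<Rightarrow> nat \<times> nat \<Rightarrow> complex" where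
  "Dket i j = (\<lambda>(a,b).
     if i = j then (if a = i \<and> b = i then 1 else 0)
     else (if (a = i \<and> b = j) \<or> (a = j \<and> b = i) then complex_of_real (1 / sqrt 2) else 0))"

definition upper_pairs :: "nat \<Rightarrow> (nat \<times> nat) set" where
  "upper_pairs d = {(i,j). i \<le> j \<and> j < d}"

definition ds_weights :: "nat \<Rightarrow> (nat \<Rightarrow> nat \<Rightarrow> real) \<Rightarrow> bool" where
  "ds_weights d p \<longleftrightarrow>
     (\<forall>(i,j)\<in>upper_pairs d. p i j \<ge> 0) \<and> (\<Sum>(i,j)\<in>upper_pairs d. p i j) = 1"

definition ds_state :: "nat \<Rightarrow> (nat \<Rightarrow> nat \<Rightarrow> real) \<Rightarrow> bop" where
  "ds_state d p = (\<lambda>x y. \<Sum>(i,j)\<in>upper_pairs d.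
       complex_of_real (p i j) * Dket i j x * cnj (Dket i j y))"

definition ds_matrix :: "nat \<Rightarrow> (nat \<Rightarrow> nat \<Rightarrow> real) \<Rightarrow> nat \<Rightarrow> nat \<Rightarrow> real" where
  "ds_matrix d p = (\<lambda>i j. if i = j then p i i else p (min i j) (max i j) / 2)"

definition completely_positive :: "nat \<Rightarrow> (nat \<Rightarrow> nat \<Rightarrow> real) \<Rightarrow> bool" where
  "completely_positive d A \<longleftrightarrow>
     (\<exists>(k::nat) (B::nat \<Rightarrow> nat \<Rightarrow> real). k \<ge> 1 \<and>
        (\<forall>i<d. \<forall>m<k. B i m \<ge> 0) \<and>
        (\<forall>i<d. \<forall>j<d. A i j = (\<Sum>m<k. B i m * B j m)))"

end

theory Submission
  imports Defs
begin

text \<open>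
  On the diagonal a DS state reproduces its matrix, \<open>\<rho>(ij,ij) = M(\<rho>)\<^sub>i\<^sub>j\<close>, and its
  swap defect \<open>\<rho>(ab,ab) + \<rho>(ba,ba) - \<rho>(ab,ba) - \<rho>(ba,ab)\<close> vanishes. For a product state
  \<open>A \<otimes> B\<close> the swap defect is at least \<open>(\<surd>(A\<^sub>a\<^sub>a B\<^sub>b\<^sub>b) - \<surd>(A\<^sub>b\<^sub>b B\<^sub>a\<^sub>a))\<^sup>2\<close>, by the
  Cauchy-Schwarz inequality for the \<open>2\<times>2\<close> principal minors. Hence in a separable
  decomposition \<open>\<Sum>\<^sub>m w\<^sub>m A\<^sub>m \<otimes> B\<^sub>m\<close> of a DS state the diagonals of \<open>A\<^sub>m\<close> and \<open>B\<^sub>m\<close> are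
  proportional, so equal, and \<open>M(\<rho>)\<^sub>i\<^sub>j = \<Sum>\<^sub>m w\<^sub>m (A\<^sub>m)\<^sub>i\<^sub>i (A\<^sub>m)\<^sub>j\<^sub>j\<close> is completely positive.

  Conversely let \<open>M(\<rho>) = C C\<^sup>T\<close> with \<open>C \<ge> 0\<close>. For a column \<open>c\<close> of \<open>C\<close> put
  \<open>\<psi>\<^sub>t(a) = \<surd>c\<^sub>a exp(2\<pi>i t 3\<^sup>a / N)\<close> with \<open>N = 2\<cdot>3\<^sup>d + 1\<close>. Averaging \<open>|\<psi>\<^sub>t\<rangle>\<langle>\<psi>\<^sub>t| \<otimes> |\<psi>\<^sub>t\<rangle>\<langle>\<psi>\<^sub>t|\<close>
  over \<open>t < N\<close> kills the entry at \<open>(ik,jl)\<close> unless \<open>3\<^sup>i + 3\<^sup>k = 3\<^sup>j + 3\<^sup>l\<close>, i.e. unless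
  \<open>{i,k} = {j,l}\<close>, since sums of two powers of 3 determine the exponents. Summing over the
  columns leaves exactly the DS state with matrix \<open>\<Sum>\<^sub>c c c\<^sup>T = M(\<rho>)\<close>.
\<close>

lemma sum_eq_single:
  assumes "finite A" "a \<in> A" "\<And>x. x \<in> A \<Longrightarrow> x \<noteq> a \<Longrightarrow> f x = 0"
  shows "sum f A = f a"
proof -
  have "sum f A = sum f {a}"
    by (rule sum.mono_neutral_right) (use assms in auto)
  then show ?thesis by simp
qed

lemma sum_eq_pair:
  assumes "finite A" "a \<in> A" "b \<in> A" "a \<noteq> b"
    and "\<And>x. x \<in> A \<Longrightarrow> x \<noteq> a \<Longrightarrow> x \<noteq> b \<Longrightarrow> f x = 0"
  shows "sum f A = f a + f b"
proof -
  have "sum f A = sum f {a, b}"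
    by (rule sum.mono_neutral_right) (use assms in auto)
  then show ?thesis using assms(4) by simp
qed

lemma sum_lessThan_mult_div_mod:
  fixes K N :: nat
  shows "(\<Sum>q<K * N. f (q div N) (q mod N)) = (\<Sum>m<K. \<Sum>t<N. f m t)"
  by (simp add: sum_mult_product)

lemma eq_if_proportional_sum_one:
  fixes x y :: "nat \<Rightarrow> 'a::comm_semiring_1"
  assumes "\<And>b. b < d \<Longrightarrow> x a * y b = x b * y a"
    and "(\<Sum>b<d. x b) = 1" "(\<Sum>b<d. y b) = 1"
  shows "x a = y a"
proof -
  have "x a = x a * (\<Sum>b<d. y b)" using assms(3) by simp
  also have "\<dots> = (\<Sum>b<d. x b * y a)"
    unfolding sum_distrib_left by (rule sum.cong) (simp_all add: assms(1))
  also have "\<dots> = y a" using assms(2) by (simp flip: sum_distrib_right)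
  finally show ?thesis .
qed

subsection \<open>Density matrices\<close>

definition quad_form :: "nat \<Rightarrow> cmat \<Rightarrow> (nat \<Rightarrow> complex) \<Rightarrow> complex" where
  "quad_form d A v = (\<Sum>i<d. \<Sum>j<d. cnj (v i) * A i j * v j)"

lemma density_iff_quad_form:
  "density d A \<longleftrightarrow>
     (\<forall>v. Im (quad_form d A v) = 0 \<and> Re (quad_form d A v) \<ge> 0) \<and> (\<Sum>i<d. A i i) = 1"
  by (simp add: density_def quad_form_def)

lemma quad_form_point:
  assumes "a < d"
  shows "quad_form d A (\<lambda>i. if i = a then 1 else 0) = A a a"
proof -
  have "(\<Sum>j<d. cnj (if i = a then 1 else 0) * A i j * (if j = a then 1 else 0)) =
      (if i = a then A i a else 0)" for i
    using assms by (subst sum_eq_single[of _ a]) auto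
  then show ?thesis
    using assms by (simp add: quad_form_def)
qed

lemma quad_form_two_points:
  assumes "a < d" "b < d" "a \<noteq> b"
  shows "quad_form d A (\<lambda>i. if i = a then x else if i = b then y else 0) =
    cnj x * A a a * x + cnj x * A a b * y + cnj y * A b a * x + cnj y * A b b * y"
proof -
  let ?v = "\<lambda>i. if i = a then x else if i = b then y else 0"
  have "(\<Sum>j<d. cnj (?v i) * A i j * ?v j) = cnj (?v i) * A i a * x + cnj (?v i) * A i b * y" for i
    using assms by (subst sum_eq_pair[of _ a b]) auto
  then have "quad_form d A ?v = (\<Sum>i<d. cnj (?v i) * A i a * x + cnj (?v i) * A i b * y)"
    by (simp add: quad_form_def)
  also have "\<dots> = cnj x * A a a * x + cnj x * A a b * y + (cnj y * A b a * x + cnj y * A b b * y)"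
    using assms by (subst sum_eq_pair[of _ a b]) auto
  finally show ?thesis by (simp add: add.assoc)
qed

lemma density_quad_form:
  assumes "density d A"
  shows "Im (quad_form d A v) = 0" "Re (quad_form d A v) \<ge> 0"
  using assms by (simp_all add: density_iff_quad_form)

lemma density_Re_trace:
  assumes "density d A"
  shows "(\<Sum>i<d. Re (A i i)) = 1"
proof -
  have "(\<Sum>i<d. A i i) = 1" using assms by (simp add: density_def)
  from arg_cong[where f = Re, OF this] show ?thesis by (simp add: Re_sum)
qed

lemma density_diag:
  assumes "density d A" "a < d"
  shows "of_real (Re (A a a)) = A a a" "Re (A a a) \<ge> 0"
  using density_quad_form[OF assms(1), of "\<lambda>i. if i = a then 1 else 0"]
  unfolding quad_form_point[OF assms(2)] by (simp_all add: complex_eq_iff)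

lemma density_hermitian:
  assumes "density d A" "a < d" "b < d"
  shows "A b a = cnj (A a b)"
proof (cases "a = b")
  case True
  then show ?thesis using density_diag[OF assms(1,2)] by (simp add: complex_eq_iff)
next
  case False
  have Im_form: "Im (cnj x * A a a * x + cnj x * A a b * y + cnj y * A b a * x + cnj y * A b b * y) = 0"
    for x y
    using density_quad_form(1)[OF assms(1), of "\<lambda>i. if i = a then x else if i = b then y else 0"]
    unfolding quad_form_two_points[OF assms(2,3) False] .
  have "Im (A a a) = 0" "Im (A b b) = 0"
    using density_diag(1)[OF assms(1,2)] density_diag(1)[OF assms(1,3)] by (metis Im_complex_of_real)+
  then show ?thesis using Im_form[of 1 1] Im_form[of 1 \<i>] by (simp add: complex_eq_iff)
qed

lemma Re_hermitian_form_2: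
  "Re (cnj x * of_real \<alpha> * x + cnj x * c * y + cnj y * cnj c * x + cnj y * of_real \<beta> * y)
     = \<alpha> * (cmod x)\<^sup>2 + \<beta> * (cmod y)\<^sup>2 + 2 * Re (cnj x * c * y)"
proof -
  have "cnj z * of_real \<gamma> * z = of_real (\<gamma> * (cmod z)\<^sup>2)" for z \<gamma>
    unfolding of_real_mult complex_norm_square by (simp add: ac_simps)
  moreover have "cnj y * cnj c * x = cnj (cnj x * c * y)" by simp
  moreover have "Re (of_real r + u + cnj u + of_real s) = r + s + 2 * Re u" for r s u
    by simp
  ultimately show ?thesis by (simp only:)
qed

lemma density_entry_norm_le:
  assumes "density d A" "a < d" "b < d"
  shows "(cmod (A a b))\<^sup>2 \<le> Re (A a a) * Re (A b b)"
proof (cases "a = b")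
  case True
  then show ?thesis using density_diag(1)[OF assms(1,2)]
    by (metis norm_of_real order.refl power2_abs power2_eq_square)
next
  case False
  define \<alpha> \<beta> c where "\<alpha> = Re (A a a)" and "\<beta> = Re (A b b)" and "c = A a b"
  define n where "n = (cmod c)\<^sup>2"
  have \<alpha>\<beta>: "\<alpha> \<ge> 0" "\<beta> \<ge> 0"
    using density_diag(2) assms by (auto simp: \<alpha>_def \<beta>_def)
  have form: "\<alpha> * (cmod x)\<^sup>2 + \<beta> * (cmod y)\<^sup>2 + 2 * Re (cnj x * c * y) \<ge> 0" for x y
  proof -
    have "Re (cnj x * of_real \<alpha> * x + cnj x * c * y + cnj y * cnj c * x + cnj y * of_real \<beta> * y) \<ge> 0"
      using density_quad_form(2)[OF assms(1), of "\<lambda>i. if i = a then x else if i = b then y else 0"]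
      unfolding quad_form_two_points[OF assms(2,3) False] density_hermitian[OF assms]
        \<alpha>_def \<beta>_def c_def
      by (simp only: density_diag(1)[OF assms(1,2)] density_diag(1)[OF assms(1,3)])
    then show ?thesis by (simp only: Re_hermitian_form_2)
  qed
  have cnj_c: "cnj c * c = of_real n"
    unfolding n_def complex_norm_square by (rule mult.commute)
  consider "\<beta> > 0" | "\<alpha> > 0" | "\<alpha> = 0" "\<beta> = 0" using \<alpha>\<beta> by linarith
  then have "n \<le> \<alpha> * \<beta>"
  proof cases
    case 1
    have e: "cnj (of_real \<beta>) * c * (- cnj c) = - of_real (\<beta> * n)"
      using cnj_c by (simp add: algebra_simps)
    have "0 \<le> \<alpha> * \<beta>\<^sup>2 + \<beta> * n - 2 * (\<beta> * n)"
      using form[of "of_real \<beta>" "- cnj c", unfolded e] \<alpha>\<beta> by (simp add: n_def)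
    then have "0 \<le> \<beta> * (\<alpha> * \<beta> - n)" by (simp add: algebra_simps power2_eq_square)
    then show ?thesis using 1 by (simp add: zero_le_mult_iff)
  next
    case 2
    have e: "cnj (- c) * c * of_real \<alpha> = - of_real (\<alpha> * n)"
      using cnj_c by (simp add: algebra_simps)
    have "0 \<le> \<alpha> * n + \<beta> * \<alpha>\<^sup>2 - 2 * (\<alpha> * n)"
      using form[of "- c" "of_real \<alpha>", unfolded e] \<alpha>\<beta> by (simp add: n_def)
    then have "0 \<le> \<alpha> * (\<alpha> * \<beta> - n)" by (simp add: algebra_simps power2_eq_square)
    then show ?thesis using 2 by (simp add: zero_le_mult_iff)
  next
    case 3
    have e: "cnj 1 * c * (- cnj c) = - of_real n"
      using cnj_c by (simp add: algebra_simps)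
    have "0 \<le> - 2 * n" using form[of 1 "- cnj c", unfolded e] 3 by simp
    moreover have "n \<ge> 0" by (simp add: n_def)
    ultimately show ?thesis using 3 by simp
  qed
  then show ?thesis by (simp add: n_def c_def \<alpha>_def \<beta>_def)
qed

lemma rank_one_density:
  fixes \<phi> :: "nat \<Rightarrow> complex"
  assumes "s > 0" "(\<Sum>i<d. (cmod (\<phi> i))\<^sup>2) = s"
  shows "density d (\<lambda>i j. \<phi> i * cnj (\<phi> j) / of_real s)"
  unfolding density_iff_quad_form
proof (intro conjI allI)
  fix v :: "nat \<Rightarrow> complex"
  define z where "z = (\<Sum>i<d. cnj (v i) * \<phi> i)"
  have "quad_form d (\<lambda>i j. \<phi> i * cnj (\<phi> j) / of_real s) v = z * cnj z / of_real s"
    unfolding quad_form_def z_def cnj_sum sum_product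
    by (simp add: sum_divide_distrib algebra_simps)
  also have "\<dots> = of_real ((cmod z)\<^sup>2 / s)"
    by (simp flip: complex_norm_square)
  finally have form: "quad_form d (\<lambda>i j. \<phi> i * cnj (\<phi> j) / of_real s) v = of_real ((cmod z)\<^sup>2 / s)" .
  show "Im (quad_form d (\<lambda>i j. \<phi> i * cnj (\<phi> j) / of_real s) v) = 0"
    unfolding form by simp
  show "Re (quad_form d (\<lambda>i j. \<phi> i * cnj (\<phi> j) / of_real s) v) \<ge> 0"
    unfolding form using assms(1) by simp
next
  have "(\<Sum>i<d. \<phi> i * cnj (\<phi> i) / of_real s) = of_real (\<Sum>i<d. (cmod (\<phi> i))\<^sup>2) / of_real s"
    by (simp add: sum_divide_distrib flip: complex_norm_square)
  then show "(\<Sum>i<d. \<phi> i * cnj (\<phi> i) / of_real s) = 1"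
    using assms by simp
qed

lemma basis_state_density:
  assumes "d > 0"
  shows "density d (\<lambda>i j. if i = 0 \<and> j = 0 then 1 else 0)"
proof -
  let ?e = "\<lambda>i::nat. if i = 0 then 1 else 0 :: complex"
  have norm: "(\<Sum>i<d. (cmod (?e i))\<^sup>2) = 1"
    using assms by (subst sum_eq_single[of _ 0]) auto
  have "(\<lambda>i j. ?e i * cnj (?e j) / of_real 1) = (\<lambda>i j. if i = 0 \<and> j = 0 then 1 else 0)"
    by (intro ext) simp
  with rank_one_density[OF zero_less_one norm] show ?thesis by simp
qed

subsection \<open>Entries of DS states\<close>

lemma Dket_eq:
  assumes "x \<le> y"
  shows "Dket x y (i, k) =
    (if x = min i k \<and> y = max i k then (if i = k then 1 else of_real (1 / sqrt 2)) else 0)"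
  using assms unfolding Dket_def by (cases "i \<le> k") (auto simp: min_def max_def)

lemma finite_upper_pairs: "finite (upper_pairs d)"
  by (rule finite_subset[of _ "{..<d} \<times> {..<d}"]) (auto simp: upper_pairs_def)

lemma same_pair_iff_min_max:
  fixes i k j l :: nat
  shows "(min i k = min j l \<and> max i k = max j l) \<longleftrightarrow> (j, l) = (i, k) \<or> (j, l) = (k, i)"
  by (cases "i \<le> k"; cases "j \<le> l") (auto simp: min_def max_def)

lemma ds_state_entry:
  assumes "i < d" "k < d"
  shows "ds_state d p (i, k) (j, l) =
    (if (j, l) = (i, k) \<or> (j, l) = (k, i) then of_real (ds_matrix d p i k) else 0)"
proof -
  let ?x = "min i k" and ?y = "max i k"
  have "ds_state d p (i, k) (j, l) = of_real (p ?x ?y) * Dket ?x ?y (i, k) * cnj (Dket ?x ?y (j, l))"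
    unfolding ds_state_def
  proof (subst sum_eq_single[OF finite_upper_pairs, of "(?x, ?y)"])
    show "(?x, ?y) \<in> upper_pairs d" using assms by (auto simp: upper_pairs_def)
  next
    fix z assume "z \<in> upper_pairs d" "z \<noteq> (?x, ?y)"
    then obtain x y where z: "z = (x, y)" "x \<le> y" and ne: "\<not> (x = ?x \<and> y = ?y)"
      by (auto simp: upper_pairs_def)
    then have "Dket x y (i, k) = 0" by (simp only: Dket_eq[OF z(2)] ne if_False)
    then show "(case z of (x, y) \<Rightarrow> of_real (p x y) * Dket x y (i, k) * cnj (Dket x y (j, l))) = 0"
      using z by simp
  qed simp
  also have "\<dots> = (if (j, l) = (i, k) \<or> (j, l) = (k, i) then of_real (ds_matrix d p i k) else 0)"
  proof (cases "(j, l) = (i, k) \<or> (j, l) = (k, i)")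
    case True
    then have jl: "min j l = ?x" "max j l = ?y" "j = l \<longleftrightarrow> i = k"
      by (auto simp: min.commute max.commute)
    have half: "of_real (1 / sqrt 2) * cnj (of_real (1 / sqrt 2)) = (of_real (1 / 2) :: complex)"
      by (simp flip: of_real_mult)
    show ?thesis
      using True jl by (cases "i = k") (simp_all add: Dket_eq ds_matrix_def half flip: of_real_mult)
  next
    case False
    then have ne: "\<not> (?x = min j l \<and> ?y = max j l)"
      using same_pair_iff_min_max[of i k j l] by auto
    have "Dket ?x ?y (j, l) = 0"
      by (simp only: Dket_eq[OF order.trans[OF min.cobounded1 max.cobounded1]] ne if_False)
    then show ?thesis using False by auto
  qed
  finally show ?thesis .
qed

lemma ds_state_swap_defect:
  assumes "a < d" "b < d"
  shows "ds_state d p (a, b) (a, b) + ds_state d p (b, a) (b, a)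
       - ds_state d p (a, b) (b, a) - ds_state d p (b, a) (a, b) = 0"
proof -
  have "ds_matrix d p b a = ds_matrix d p a b"
    by (simp add: ds_matrix_def min.commute max.commute)
  then have "ds_state d p (a, b) (a, b) = of_real (ds_matrix d p a b)"
    "ds_state d p (b, a) (b, a) = of_real (ds_matrix d p a b)"
    "ds_state d p (a, b) (b, a) = of_real (ds_matrix d p a b)"
    "ds_state d p (b, a) (a, b) = of_real (ds_matrix d p a b)"
    using ds_state_entry[OF assms, of p] ds_state_entry[OF assms(2,1), of p] by simp_all
  then show ?thesis by simp
qed

lemma ds_matrix_sum:
  assumes "ds_weights d p"
  shows "(\<Sum>a<d. \<Sum>b<d. ds_matrix d p a b) = 1"
proof -
  let ?S = "{..<d} \<times> {..<d}" and ?f = "\<lambda>(a::nat, b::nat). (min a b, max a b)"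
  have image: "?f ` ?S = upper_pairs d"
  proof
    show "?f ` ?S \<subseteq> upper_pairs d" by (auto simp: upper_pairs_def)
    show "upper_pairs d \<subseteq> ?f ` ?S"
    proof
      fix y assume "y \<in> upper_pairs d"
      then obtain a b where "y = (a, b)" "a \<le> b" "b < d" by (auto simp: upper_pairs_def)
      then show "y \<in> ?f ` ?S" by (intro image_eqI[of _ _ "(a, b)"]) auto
    qed
  qed
  have fiber: "(\<Sum>x\<in>{x\<in>?S. ?f x = (a, b)}. case x of (i, j) \<Rightarrow> ds_matrix d p i j) = p a b"
    if "(a, b) \<in> upper_pairs d" for a b
  proof (cases "a = b")
    case True
    then have "{x\<in>?S. ?f x = (a, b)} = {(a, a)}"
      using that by (auto simp: upper_pairs_def min_def max_def split: if_splits)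
    then show ?thesis using True by (simp add: ds_matrix_def)
  next
    case False
    with that have "a < b" "b < d" by (auto simp: upper_pairs_def)
    then have "{x\<in>?S. ?f x = (a, b)} = {(a, b), (b, a)}"
      by (auto simp: min_def max_def split: if_splits)
    then show ?thesis using \<open>a < b\<close> by (simp add: ds_matrix_def)
  qed
  have "(\<Sum>a<d. \<Sum>b<d. ds_matrix d p a b) = (\<Sum>(a, b)\<in>?S. ds_matrix d p a b)"
    by (simp add: sum.cartesian_product)
  also have "\<dots> = (\<Sum>y\<in>?f ` ?S. \<Sum>x\<in>{x\<in>?S. ?f x = y}. case x of (i, j) \<Rightarrow> ds_matrix d p i j)"
    by (rule sum.image_gen) simp
  also have "\<dots> = (\<Sum>(a, b)\<in>upper_pairs d. p a b)"
    unfolding image by (rule sum.cong) (auto simp: fiber)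
  also have "\<dots> = 1" using assms by (simp add: ds_weights_def)
  finally show ?thesis .
qed

subsection \<open>Separability implies complete positivity\<close>

definition swap_defect :: "cmat \<Rightarrow> cmat \<Rightarrow> nat \<Rightarrow> nat \<Rightarrow> real" where
  "swap_defect A B a b = Re (A a a) * Re (B b b) + Re (A b b) * Re (B a a) - 2 * Re (A a b * B b a)"

lemma product_swap_defect:
  assumes "density d A" "density d B" "a < d" "b < d"
  shows "A a a * B b b + A b b * B a a - A a b * B b a - A b a * B a b = of_real (swap_defect A B a b)"
proof -
  let ?u = "A a b * B b a"
  have "A b a * B a b = cnj ?u"
    using density_hermitian[OF assms(1,3,4)] density_hermitian[OF assms(2,4,3)] by simp
  then have "A a a * B b b + A b b * B a a - A a b * B b a - A b a * B a b
      = A a a * B b b + A b b * B a a - (?u + cnj ?u)"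
    by (simp add: algebra_simps)
  also have "?u + cnj ?u = of_real (2 * Re ?u)"
    by (simp add: complex_eq_iff)
  finally show ?thesis
    using density_diag(1)[OF assms(1,3)] density_diag(1)[OF assms(1,4)]
      density_diag(1)[OF assms(2,3)] density_diag(1)[OF assms(2,4)]
    by (simp add: swap_defect_def)
qed

lemma swap_defect_lower_bound:
  assumes A: "density d A" and B: "density d B" and ab: "a < d" "b < d"
  shows "(sqrt (Re (A a a) * Re (B b b)) - sqrt (Re (A b b) * Re (B a a)))\<^sup>2 \<le> swap_defect A B a b"
proof -
  define X Y where "X = Re (A a a) * Re (B b b)" and "Y = Re (A b b) * Re (B a a)"
  have "X \<ge> 0" "Y \<ge> 0" using density_diag(2) A B ab by (auto simp: X_def Y_def)
  have "Re (A a b * B b a) \<le> cmod (A a b * B b a)" by (rule complex_Re_le_cmod)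
  also have "\<dots> = cmod (A a b) * cmod (B b a)" by (rule norm_mult)
  also have "\<dots> \<le> sqrt (Re (A a a) * Re (A b b)) * sqrt (Re (B b b) * Re (B a a))"
    using density_entry_norm_le[OF A ab] density_entry_norm_le[OF B ab(2,1)]
      density_diag(2)[OF A ab(1)] density_diag(2)[OF A ab(2)]
    by (intro mult_mono) (simp_all add: real_le_rsqrt)
  also have "\<dots> = sqrt X * sqrt Y"
    by (simp add: X_def Y_def ac_simps flip: real_sqrt_mult)
  finally have "(sqrt X - sqrt Y)\<^sup>2 \<le> X + Y - 2 * Re (A a b * B b a)"
    using \<open>X \<ge> 0\<close> \<open>Y \<ge> 0\<close> by (simp add: power2_eq_square algebra_simps)
  then show ?thesis by (simp only: swap_defect_def X_def Y_def)
qed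

lemma ds_decomposition_swap_defect:
  fixes n :: nat
  assumes dec: "\<forall>i<d. \<forall>k<d. \<forall>j<d. \<forall>l<d.
      ds_state d p (i, k) (j, l) = (\<Sum>m<n. of_real (w m) * A m i j * B m k l)"
    and dens: "\<forall>m<n. density d (A m) \<and> density d (B m)" and ab: "a < d" "b < d"
  shows "(\<Sum>m<n. w m * swap_defect (A m) (B m) a b) = 0"
proof -
  have "of_real (\<Sum>m<n. w m * swap_defect (A m) (B m) a b) = (\<Sum>m<n. of_real (w m) *
      (A m a a * B m b b + A m b b * B m a a - A m a b * B m b a - A m b a * B m a b))"
    unfolding of_real_sum
  proof (rule sum.cong)
    fix m assume "m \<in> {..<n}"
    then have "density d (A m)" "density d (B m)" using dens by auto
    from product_swap_defect[OF this ab] show "of_real (w m * swap_defect (A m) (B m) a b) = of_real (w m) *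
      (A m a a * B m b b + A m b b * B m a a - A m a b * B m b a - A m b a * B m a b)"
      by simp
  qed simp
  also have "\<dots> = ds_state d p (a, b) (a, b) + ds_state d p (b, a) (b, a)
      - ds_state d p (a, b) (b, a) - ds_state d p (b, a) (a, b)"
    using dec ab
    by (simp add: sum_subtractf[symmetric] sum.distrib[symmetric] algebra_simps del: sum_subtractf)
  also have "\<dots> = 0" by (rule ds_state_swap_defect[OF ab])
  finally show ?thesis by (simp only: of_real_eq_0_iff)
qed

lemma ds_decomposition_diag_proportional:
  fixes n :: nat
  assumes dec: "\<forall>i<d. \<forall>k<d. \<forall>j<d. \<forall>l<d.
      ds_state d p (i, k) (j, l) = (\<Sum>m<n. of_real (w m) * A m i j * B m k l)"
    and w: "\<forall>m<n. w m \<ge> 0" and dens: "\<forall>m<n. density d (A m) \<and> density d (B m)"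
    and m: "m < n" "w m > 0" and ab: "a < d" "b < d"
  shows "Re (A m a a) * Re (B m b b) = Re (A m b b) * Re (B m a a)"
proof -
  have bound: "(sqrt (Re (A q a a) * Re (B q b b)) - sqrt (Re (A q b b) * Re (B q a a)))\<^sup>2
      \<le> swap_defect (A q) (B q) a b" if "q < n" for q
    using swap_defect_lower_bound dens that ab by blast
  have nonneg: "w q * swap_defect (A q) (B q) a b \<ge> 0" if "q \<in> {..<n}" for q
  proof -
    have "w q \<ge> 0" "swap_defect (A q) (B q) a b \<ge> 0"
      using that w bound[of q] by (auto intro: order.trans[OF zero_le_power2])
    then show ?thesis by simp
  qed
  have "w m * swap_defect (A m) (B m) a b = 0"
    by (rule sum_nonneg_0[of "{..<n}"])
      (use nonneg ds_decomposition_swap_defect[OF dec dens ab] m in simp_all)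
  then have "(sqrt (Re (A m a a) * Re (B m b b)) - sqrt (Re (A m b b) * Re (B m a a)))\<^sup>2 \<le> 0"
    using bound[OF m(1)] m(2) by simp
  then show ?thesis by simp
qed

lemma ds_decomposition_diag_eq:
  fixes n :: nat
  assumes dec: "\<forall>i<d. \<forall>k<d. \<forall>j<d. \<forall>l<d.
      ds_state d p (i, k) (j, l) = (\<Sum>m<n. of_real (w m) * A m i j * B m k l)"
    and w: "\<forall>m<n. w m \<ge> 0" and dens: "\<forall>m<n. density d (A m) \<and> density d (B m)"
    and m: "m < n" "w m > 0" and a: "a < d"
  shows "Re (A m a a) = Re (B m a a)"
proof (rule eq_if_proportional_sum_one[where d = d])
  show "Re (A m a a) * Re (B m b b) = Re (A m b b) * Re (B m a a)" if "b < d" for b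
    by (rule ds_decomposition_diag_proportional[OF dec w dens m a that])
  show "(\<Sum>b<d. Re (A m b b)) = 1" "(\<Sum>b<d. Re (B m b b)) = 1"
    using density_Re_trace dens m(1) by blast+
qed

lemma separable_imp_completely_positive:
  assumes "separable d (ds_state d p)"
  shows "completely_positive d (ds_matrix d p)"
proof -
  obtain n w and A B :: "nat \<Rightarrow> cmat" where
    w: "\<forall>m<n. w m \<ge> 0" and w_sum: "(\<Sum>m<n. w m) = 1" and
    dens: "\<forall>m<n. density d (A m) \<and> density d (B m)" and
    dec: "\<forall>i<d. \<forall>k<d. \<forall>j<d. \<forall>l<d.
      ds_state d p (i, k) (j, l) = (\<Sum>m<n. of_real (w m) * A m i j * B m k l)"
    using assms unfolding separable_def by blast
  define F where "F i m = sqrt (w m) * Re (A m i i)" for i m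
  have "n \<ge> 1" using w_sum by (cases n) auto
  moreover have "F i m \<ge> 0" if "i < d" "m < n" for i m
  proof -
    have "w m \<ge> 0" "Re (A m i i) \<ge> 0" using w dens density_diag(2) that by blast+
    then show ?thesis by (simp add: F_def)
  qed
  moreover have "ds_matrix d p i j = (\<Sum>m<n. F i m * F j m)" if ij: "i < d" "j < d" for i j
  proof -
    have summand: "of_real (w m) * A m i i * B m j j = of_real (F i m * F j m)" if m: "m < n" for m
    proof -
      have "w m * Re (B m j j) = w m * Re (A m j j)"
      proof (cases "w m = 0")
        case False
        then have "w m > 0" using w m by (simp add: order.not_eq_order_implies_strict)
        then show ?thesis using ds_decomposition_diag_eq[OF dec w dens m _ ij(2)] by simp
      qed simp
      moreover have "sqrt (w m) * sqrt (w m) = w m" using w m by simp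
      moreover have "of_real (Re (A m i i)) = A m i i" "of_real (Re (B m j j)) = B m j j"
        using density_diag(1) dens m ij by blast+
      ultimately show ?thesis
        unfolding F_def by (metis (no_types, lifting) mult.assoc mult.left_commute of_real_mult)
    qed
    have "of_real (ds_matrix d p i j) = ds_state d p (i, j) (i, j)"
      using ds_state_entry[OF ij] by simp
    also have "\<dots> = (\<Sum>m<n. of_real (w m) * A m i i * B m j j)"
      using dec ij by blast
    also have "\<dots> = of_real (\<Sum>m<n. F i m * F j m)"
      unfolding of_real_sum by (rule sum.cong) (simp_all add: summand)
    finally show ?thesis by (simp only: of_real_eq_iff)
  qed
  ultimately show ?thesis unfolding completely_positive_def by blast
qed

subsection \<open>Complete positivity implies separability\<close>

lemma three_pow_Suc_dvd_add_iff:
  assumes "a \<le> b"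
  shows "(3::nat) ^ Suc c dvd 3 ^ a + 3 ^ b \<longleftrightarrow> c < a"
proof
  assume "c < a"
  then show "(3::nat) ^ Suc c dvd 3 ^ a + 3 ^ b"
    using assms by (intro dvd_add le_imp_power_dvd) auto
next
  assume dvd: "(3::nat) ^ Suc c dvd 3 ^ a + 3 ^ b"
  show "c < a"
  proof (rule ccontr)
    assume "\<not> c < a"
    then have "(3::nat) ^ a * 3 dvd 3 ^ a * (1 + 3 ^ (b - a))"
      using assms dvd_trans[OF le_imp_power_dvd[of "Suc a" "Suc c"] dvd]
      by (simp add: algebra_simps flip: power_add)
    then have "(3::nat) dvd 1 + 3 ^ (b - a)"
      by (simp only: nat_mult_dvd_cancel1[of "(3::nat) ^ a"] zero_less_power zero_less_numeral)
    moreover have "(1 + (3::nat) ^ n) mod 3 \<noteq> 0" for n by (cases n) simp_all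
    ultimately show False by (simp only: dvd_eq_mod_eq_0)
  qed
qed

lemma three_pow_add_eq_iff:
  "(3::nat) ^ i + 3 ^ k = 3 ^ j + 3 ^ l \<longleftrightarrow> (j, l) = (i, k) \<or> (j, l) = (k, i)"
proof
  assume eq: "(3::nat) ^ i + 3 ^ k = 3 ^ j + 3 ^ l"
  have min_max: "(3::nat) ^ x + 3 ^ y = 3 ^ min x y + 3 ^ max x y" for x y
    by (cases "x \<le> y") (simp_all add: min_def max_def)
  have "c < min i k \<longleftrightarrow> c < min j l" for c
    using eq three_pow_Suc_dvd_add_iff[of "min i k" "max i k" c]
      three_pow_Suc_dvd_add_iff[of "min j l" "max j l" c]
    by (simp flip: min_max)
  then have "min i k = min j l" by (metis less_irrefl linorder_neqE_nat)
  moreover have "max i k = max j l"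
    using eq \<open>min i k = min j l\<close> min_max[of i k] min_max[of j l] by simp
  ultimately show "(j, l) = (i, k) \<or> (j, l) = (k, i)"
    using same_pair_iff_min_max[of i k j l] by blast
qed auto

lemma sum_cis_multiple:
  fixes e :: int
  assumes "N > 0" "\<bar>e\<bar> < int N"
  shows "(\<Sum>t<N. cis (2 * pi * real t * of_int e / real N)) = (if e = 0 then of_nat N else 0)"
proof (cases "e = 0")
  case False
  define z where "z = cis (2 * pi * of_int e / real N)"
  have powers: "cis (2 * pi * real t * of_int e / real N) = z ^ t" for t
    by (simp add: z_def Complex.DeMoivre algebra_simps)
  have "z \<noteq> 1"
  proof
    assume "z = 1"
    then have "cos (2 * pi * of_int e / real N) = 1" by (simp add: z_def complex_eq_iff)
    then obtain n :: int where "2 * pi * of_int e / real N = of_int n * 2 * pi"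
      using cos_one_2pi_int by blast
    then have "real_of_int e = of_int n * real N" using assms(1) by (simp add: field_simps)
    then have "e = n * int N" by (metis of_int_eq_iff of_int_mult of_int_of_nat_eq)
    moreover from this False have "\<bar>n\<bar> \<ge> 1" by auto
    ultimately have "int N \<le> \<bar>e\<bar>" by (simp add: abs_mult mult_le_cancel_right1)
    then show False using assms(2) by simp
  qed
  moreover have "z ^ N = 1"
    using assms(1) by (simp add: z_def Complex.DeMoivre cis_multiple_2pi)
  ultimately show ?thesis unfolding powers geometric_sum[OF \<open>z \<noteq> 1\<close>] using False by simp
qed simp

definition phase_vector :: "nat \<Rightarrow> (nat \<Rightarrow> real) \<Rightarrow> nat \<Rightarrow> nat \<Rightarrow> complex" where
  "phase_vector N c t a = of_real (sqrt (c a)) * cis (2 * pi * real t * 3 ^ a / real N)"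

lemma phase_vector_average:
  assumes c: "\<forall>a<d. c a \<ge> 0" and N: "N = 2 * 3 ^ d + 1"
    and idx: "i < d" "k < d" "j < d" "l < d"
  shows "(\<Sum>t<N. phase_vector N c t i * cnj (phase_vector N c t j)
              * phase_vector N c t k * cnj (phase_vector N c t l))
       = of_real (if (j, l) = (i, k) \<or> (j, l) = (k, i) then real N * (c i * c k) else 0)"
proof -
  define e :: int where "e = 3 ^ i + 3 ^ k - 3 ^ j - 3 ^ l"
  define r where "r = sqrt (c i) * sqrt (c j) * sqrt (c k) * sqrt (c l)"
  have "phase_vector N c t i * cnj (phase_vector N c t j) * phase_vector N c t k
          * cnj (phase_vector N c t l) = of_real r * cis (2 * pi * real t * of_int e / real N)" for t
    by (simp add: phase_vector_def r_def e_def cis_cnj cis_mult add_divide_distrib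
        diff_divide_distrib algebra_simps)
  then have "(\<Sum>t<N. phase_vector N c t i * cnj (phase_vector N c t j)
              * phase_vector N c t k * cnj (phase_vector N c t l))
       = of_real r * (\<Sum>t<N. cis (2 * pi * real t * of_int e / real N))"
    by (simp add: sum_distrib_left)
  also have "\<dots> = of_real (if e = 0 then real N * r else 0)"
  proof -
    have bound: "0 < (3::int) ^ x" "(3::int) ^ x < 3 ^ d" if "x < d" for x
      using that by (simp_all add: power_strict_increasing)
    have "int N = 2 * 3 ^ d + 1" using N by simp
    then have "\<bar>e\<bar> < int N"
      using bound[OF idx(1)] bound[OF idx(2)] bound[OF idx(3)] bound[OF idx(4)]
      unfolding e_def abs_less_iff by linarith
    moreover have "N > 0" using N by simp
    ultimately show ?thesis by (simp add: sum_cis_multiple)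
  qed
  also have "\<dots> = of_real (if (j, l) = (i, k) \<or> (j, l) = (k, i) then real N * (c i * c k) else 0)"
  proof -
    have "e = int ((3::nat) ^ i + 3 ^ k) - int (3 ^ j + 3 ^ l)"
      by (simp add: e_def)
    then have e_zero: "e = 0 \<longleftrightarrow> (j, l) = (i, k) \<or> (j, l) = (k, i)"
      by (simp only: right_minus_eq of_nat_eq_iff three_pow_add_eq_iff)
    have "r = c i * c k" if "(j, l) = (i, k) \<or> (j, l) = (k, i)"
    proof -
      have "r = (sqrt (c i) * sqrt (c i)) * (sqrt (c k) * sqrt (c k))"
        using that unfolding r_def by (elim disjE) (simp_all add: mult_ac)
      then show ?thesis using c idx by simp
    qed
    then show ?thesis using e_zero by simp
  qed
  finally show ?thesis .
qed

text \<open>A zero column of the factor \<open>C\<close> gets weight zero in the decomposition, so any state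
  will do for it.\<close>
definition column_state :: "nat \<Rightarrow> nat \<Rightarrow> (nat \<Rightarrow> real) \<Rightarrow> nat \<Rightarrow> cmat" where
  "column_state d N c t =
     (if (\<Sum>a<d. c a) = 0 then (\<lambda>i j. if i = 0 \<and> j = 0 then 1 else 0)
      else (\<lambda>i j. phase_vector N c t i * cnj (phase_vector N c t j) / of_real (\<Sum>a<d. c a)))"

lemma column_state_density:
  assumes "d > 0" "\<forall>a<d. c a \<ge> 0"
  shows "density d (column_state d N c t)"
proof (cases "(\<Sum>a<d. c a) = 0")
  case True
  then show ?thesis using basis_state_density[OF assms(1)] by (simp add: column_state_def)
next
  case False
  moreover have "(\<Sum>a<d. c a) \<ge> 0" by (rule sum_nonneg) (use assms(2) in simp)
  ultimately have "(\<Sum>a<d. c a) > 0" by linarith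
  moreover have "(\<Sum>a<d. (cmod (phase_vector N c t a))\<^sup>2) = (\<Sum>a<d. c a)"
    using assms(2) by (intro sum.cong) (simp_all add: phase_vector_def norm_mult)
  ultimately show ?thesis
    unfolding column_state_def if_not_P[OF False] by (rule rank_one_density)
qed

lemma column_state_average:
  assumes c: "\<forall>a<d. c a \<ge> 0" and N: "N = 2 * 3 ^ d + 1"
    and idx: "i < d" "k < d" "j < d" "l < d"
  shows "(\<Sum>t<N. of_real ((\<Sum>a<d. c a)\<^sup>2 / real N) * column_state d N c t i j * column_state d N c t k l)
       = of_real (if (j, l) = (i, k) \<or> (j, l) = (k, i) then c i * c k else 0)"
proof (cases "(\<Sum>a<d. c a) = 0")
  case True
  then have "c i = 0" using sum_nonneg_eq_0_iff[of "{..<d}" c] c idx by auto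
  then show ?thesis using True by simp
next
  case False
  have scale: "of_real (s\<^sup>2 / n) * (x / of_real s) * (y / of_real s) = x * y / of_real n"
    if "s \<noteq> 0" for s n :: real and x y :: complex
    using that by (simp add: field_simps power2_eq_square)
  have "(\<Sum>t<N. of_real ((\<Sum>a<d. c a)\<^sup>2 / real N) * column_state d N c t i j * column_state d N c t k l)
      = (\<Sum>t<N. phase_vector N c t i * cnj (phase_vector N c t j)
              * phase_vector N c t k * cnj (phase_vector N c t l)) / of_real (real N)"
    unfolding sum_divide_distrib column_state_def if_not_P[OF False] scale[OF False]
    by (simp only: mult.assoc)
  moreover have "N > 0" using N by simp
  ultimately show ?thesis using phase_vector_average[OF c N idx] by simp
qed

lemma separable_of_double_decomposition:
  fixes w :: "nat \<Rightarrow> nat \<Rightarrow> real" and A B :: "nat \<Rightarrow> nat \<Rightarrow> cmat"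
  assumes w: "\<And>m t. m < K \<Longrightarrow> t < N \<Longrightarrow> w m t \<ge> 0"
    and w_sum: "(\<Sum>m<K. \<Sum>t<N. w m t) = 1"
    and dens: "\<And>m t. m < K \<Longrightarrow> t < N \<Longrightarrow> density d (A m t) \<and> density d (B m t)"
    and dec: "\<And>i k j l. i < d \<Longrightarrow> k < d \<Longrightarrow> j < d \<Longrightarrow> l < d \<Longrightarrow>
      \<rho> (i, k) (j, l) = (\<Sum>m<K. \<Sum>t<N. of_real (w m t) * A m t i j * B m t k l)"
  shows "separable d \<rho>"
  unfolding separable_def
proof (intro exI conjI allI impI)
  fix q assume "q < K * N"
  then have "N > 0" by (cases N) auto
  with \<open>q < K * N\<close> have "q div N < K" "q mod N < N"
    by (simp_all add: less_mult_imp_div_less)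
  then show "w (q div N) (q mod N) \<ge> 0"
    "density d (A (q div N) (q mod N))" "density d (B (q div N) (q mod N))"
    using w dens by auto
next
  show "(\<Sum>q<K * N. w (q div N) (q mod N)) = 1"
    using sum_lessThan_mult_div_mod[where f = w] w_sum by simp
next
  fix i k j l assume "i < d" "k < d" "j < d" "l < d"
  then show "\<rho> (i, k) (j, l) = (\<Sum>q<K * N. of_real (w (q div N) (q mod N))
      * A (q div N) (q mod N) i j * B (q div N) (q mod N) k l)"
    using dec sum_lessThan_mult_div_mod[where f = "\<lambda>m t. of_real (w m t) * A m t i j * B m t k l"]
    by simp
qed

lemma completely_positive_imp_separable:
  assumes "d > 0" "ds_weights d p" "completely_positive d (ds_matrix d p)"
  shows "separable d (ds_state d p)"
proof -
  obtain K and C :: "nat \<Rightarrow> nat \<Rightarrow> real" where C: "\<forall>i<d. \<forall>m<K. C i m \<ge> 0"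
    and M: "\<forall>i<d. \<forall>j<d. ds_matrix d p i j = (\<Sum>m<K. C i m * C j m)"
    using assms(3) unfolding completely_positive_def by blast
  define N :: nat where "N = 2 * 3 ^ d + 1"
  define col where "col m = (\<lambda>a. C a m)" for m
  define w where "w m (t::nat) = (\<Sum>a<d. col m a)\<^sup>2 / real N" for m t
  define S where "S m = column_state d N (col m)" for m
  have col: "\<forall>a<d. col m a \<ge> 0" if "m < K" for m using C that by (simp add: col_def)
  show ?thesis
  proof (rule separable_of_double_decomposition)
    show "(\<Sum>m<K. \<Sum>t<N. w m t) = 1"
    proof -
      have "N > 0" by (simp add: N_def)
      then have "(\<Sum>t<N. w m t) = (\<Sum>a<d. \<Sum>b<d. C a m * C b m)" for m
        by (simp add: w_def col_def power2_eq_square sum_product)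
      then have "(\<Sum>m<K. \<Sum>t<N. w m t) = (\<Sum>m<K. \<Sum>a<d. \<Sum>b<d. C a m * C b m)"
        by simp
      also have "\<dots> = (\<Sum>a<d. \<Sum>b<d. ds_matrix d p a b)"
        using M by (simp add: sum.swap[of _ "{..<K}"])
      finally show ?thesis using ds_matrix_sum[OF assms(2)] by simp
    qed
  next
    fix i k j l assume idx: "i < d" "k < d" "j < d" "l < d"
    have "(\<Sum>t<N. of_real (w m t) * S m t i j * S m t k l)
        = of_real (if (j, l) = (i, k) \<or> (j, l) = (k, i) then C i m * C k m else 0)" if "m < K" for m
      using column_state_average[OF col[OF that] N_def idx] unfolding w_def S_def col_def .
    then have "(\<Sum>m<K. \<Sum>t<N. of_real (w m t) * S m t i j * S m t k l)
        = (\<Sum>m<K. of_real (if (j, l) = (i, k) \<or> (j, l) = (k, i) then C i m * C k m else 0))"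
      by simp
    also have "\<dots> = ds_state d p (i, k) (j, l)"
      using ds_state_entry[OF idx(1,2)] M idx
      by (cases "(j, l) = (i, k) \<or> (j, l) = (k, i)") (auto simp: of_real_sum)
    finally show "ds_state d p (i, k) (j, l) = (\<Sum>m<K. \<Sum>t<N. of_real (w m t) * S m t i j * S m t k l)"
      by simp
  qed (use column_state_density[OF assms(1) col] in \<open>auto simp: w_def S_def\<close>)
qed

theorem theorem1:
  fixes d :: nat and p :: "nat \<Rightarrow> nat \<Rightarrow> real"
  assumes "d \<ge> 2"
    and "ds_weights d p"
  shows "separable d (ds_state d p) \<longleftrightarrow> completely_positive d (ds_matrix d p)"
  using assms separable_imp_completely_positive completely_positive_imp_separable by auto

end
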